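(* Let $T$ be an $\mathcal O$-operator on a Lie algebra $\mathfrak g$ with respect to a representation $(V;\rho)$. Then for any Nijenhuis element $x\in\mathrm{Nij}(T)$, setting $\mathfrak T:=d_{\bar\rho}x$, i.e. $\mathfrak T(u)=[Tu,x]+T\rho(x)(u)$, the family $T_t:=T+t\mathfrak T$ is a trivial one-parameter infinitesimal deformation of $T$.
   Context: An $\mathcal O$-operator: linear $T:V\to\mathfrak g$ with $[Tu,Tv]=T(\rho(Tu)(v)-\rho(Tv)(u))$. An element $x\in\mathfrak g$ is a Nijenhuis element associated to $T$ (written $x\in\mathrm{Nij}(T)$) if $[[x,y],[x,z]]=0$ for all $y,z\in\mathfrak g$, $\rho([x,y])\rho(x)=0$ for all $y\in\mathfrak g$, and $[x,[Tu,x]+T\rho(x)(u)]=0$ for all $u\in V$. A one-parameter infinitesimal deformation of $T$ is $T+t\mathfrak T$ ($\mathfrak T:V\to\mathfrak g$ linear) which is an $\mathcal O$-operator for every scalar $t$; it is trivial if there is $x\in\mathfrak g$ such that $(\mathrm{Id}_{\mathfrak g}+t\,\mathrm{ad}_x,\mathrm{Id}_V+t\rho(x))$ is a homomorphism from $T+t\mathfrak T$ to $T$, where a homomorphism from an $\mathcal O$-operator $T'$ to $T$ is a pair of a Lie algebra homomorphism $\phi_{\mathfrak g}:\mathfrak g\to\mathfrak g$ and a linear $\phi_V:V\to V$ with $T\circ\phi_V=\phi_{\mathfrak g}\circ T'$ and $\phi_V\rho(y)(u)=\rho(\phi_{\mathfrak g}(y))(\phi_V(u))$ for all $y\in\mathfrak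 g,u\in V$. *)

theory Defs
  imports Main "HOL.Vector_Spaces"
begin

definition lie_algebra ::
  "('k::field \<Rightarrow> 'g::ab_group_add \<Rightarrow> 'g) \<Rightarrow> ('g \<Rightarrow> 'g \<Rightarrow> 'g) \<Rightarrow> bool" where
  "lie_algebra sg br \<longleftrightarrow>
     vector_space sg \<and>
     (\<forall>y. Vector_Spaces.linear sg sg (\<lambda>z. br y z)) \<and>
     (\<forall>z. Vector_Spaces.linear sg sg (\<lambda>y. br y z)) \<and>
     (\<forall>x. br x x = 0) \<and>
     (\<forall>x y z. br x (br y z) + br y (br z x) + br z (br x y) = 0)"

definition lie_rep ::
  "('k::field \<Rightarrow> 'g::ab_group_add \<Rightarrow> 'g) \<Rightarrow> ('g \<Rightarrow> 'g \<Rightarrow> 'g) \<Rightarrow>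
   ('k \<Rightarrow> 'v::ab_group_add \<Rightarrow> 'v) \<Rightarrow> ('g \<Rightarrow> 'v \<Rightarrow> 'v) \<Rightarrow> bool" where
  "lie_rep sg br sv rho \<longleftrightarrow>
     lie_algebra sg br \<and> vector_space sv \<and>
     (\<forall>x y u. rho (x + y) u = rho x u + rho y u) \<and>
     (\<forall>c x u. rho (sg c x) u = sv c (rho x u)) \<and>
     (\<forall>x. Vector_Spaces.linear sv sv (rho x)) \<and>
     (\<forall>x y u. rho (br x y) u = rho x (rho y u) - rho y (rho x u))"

definition O_operator ::
  "('k::field \<Rightarrow> 'g::ab_group_add \<Rightarrow> 'g) \<Rightarrow> ('g \<Rightarrow> 'g \<Rightarrow> 'g) \<Rightarrow>
   ('k \<Rightarrow> 'v::ab_group_add \<Rightarrow> 'v) \<Rightarrow> ('g \<Rightarrow> 'v \<Rightarrow> 'v) \<Rightarrow> ('v \<Rightarrow> 'g) \<Rightarrow> bool" where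
  "O_operator sg br sv rho T \<longleftrightarrow>
     Vector_Spaces.linear sv sg T \<and>
     (\<forall>u v. br (T u) (T v) = T (rho (T u) v - rho (T v) u))"

definition Nij ::
  "('g::ab_group_add \<Rightarrow> 'g \<Rightarrow> 'g) \<Rightarrow> ('g \<Rightarrow> 'v::ab_group_add \<Rightarrow> 'v) \<Rightarrow> ('v \<Rightarrow> 'g) \<Rightarrow> 'g set" where
  "Nij br rho T = {x.
     (\<forall>y z. br (br x y) (br x z) = 0) \<and>
     (\<forall>y u. rho (br x y) (rho x u) = 0) \<and>
     (\<forall>u. br x (br (T u) x + T (rho x u)) = 0)}"

definition lie_hom ::
  "('k::field \<Rightarrow> 'g::ab_group_add \<Rightarrow> 'g) \<Rightarrow> ('g \<Rightarrow> 'g \<Rightarrow> 'g) \<Rightarrow> ('g \<Rightarrow> 'g) \<Rightarrow> bool" where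
  "lie_hom sg br phi \<longleftrightarrow>
     Vector_Spaces.linear sg sg phi \<and> (\<forall>x y. phi (br x y) = br (phi x) (phi y))"

definition O_hom ::
  "('k::field \<Rightarrow> 'g::ab_group_add \<Rightarrow> 'g) \<Rightarrow> ('g \<Rightarrow> 'g \<Rightarrow> 'g) \<Rightarrow>
   ('k \<Rightarrow> 'v::ab_group_add \<Rightarrow> 'v) \<Rightarrow> ('g \<Rightarrow> 'v \<Rightarrow> 'v) \<Rightarrow>
   ('v \<Rightarrow> 'g) \<Rightarrow> ('v \<Rightarrow> 'g) \<Rightarrow> ('g \<Rightarrow> 'g) \<Rightarrow> ('v \<Rightarrow> 'v) \<Rightarrow> bool" where
  "O_hom sg br sv rho T' T phig phiV \<longleftrightarrow>
     lie_hom sg br phig \<and> Vector_Spaces.linear sv sv phiV \<and>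
     (\<forall>u. T (phiV u) = phig (T' u)) \<and>
     (\<forall>y u. phiV (rho y u) = rho (phig y) (phiV u))"

definition inf_deformation ::
  "('k::field \<Rightarrow> 'g::ab_group_add \<Rightarrow> 'g) \<Rightarrow> ('g \<Rightarrow> 'g \<Rightarrow> 'g) \<Rightarrow>
   ('k \<Rightarrow> 'v::ab_group_add \<Rightarrow> 'v) \<Rightarrow> ('g \<Rightarrow> 'v \<Rightarrow> 'v) \<Rightarrow> ('v \<Rightarrow> 'g) \<Rightarrow> ('v \<Rightarrow> 'g) \<Rightarrow> bool" where
  "inf_deformation sg br sv rho T Tf \<longleftrightarrow>
     Vector_Spaces.linear sv sg Tf \<and>
     (\<forall>t::'k. O_operator sg br sv rho (\<lambda>u. T u + sg t (Tf u)))"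

definition trivial_inf_deformation ::
  "('k::field \<Rightarrow> 'g::ab_group_add \<Rightarrow> 'g) \<Rightarrow> ('g \<Rightarrow> 'g \<Rightarrow> 'g) \<Rightarrow>
   ('k \<Rightarrow> 'v::ab_group_add \<Rightarrow> 'v) \<Rightarrow> ('g \<Rightarrow> 'v \<Rightarrow> 'v) \<Rightarrow> ('v \<Rightarrow> 'g) \<Rightarrow> ('v \<Rightarrow> 'g) \<Rightarrow> bool" where
  "trivial_inf_deformation sg br sv rho T Tf \<longleftrightarrow>
     inf_deformation sg br sv rho T Tf \<and>
     (\<exists>x. \<forall>t::'k. O_hom sg br sv rho (\<lambda>u. T u + sg t (Tf u)) T
                  (\<lambda>y. y + sg t (br x y)) (\<lambda>u. u + sv t (rho x u)))"

end

theory Submission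
  imports Defs
begin

text \<open>
  Write \<open>D = d x\<close>, so that \<open>T (\<rho>(x) u) = D u + [x, T u]\<close>. The family \<open>T + t D\<close> is an
  \<open>\<O>\<close>-operator for all \<open>t\<close> as soon as the first-order term vanishes, which holds for
  every coboundary \<open>d x\<close> (it is a cocycle), and \<open>D\<close> is itself an \<open>\<O>\<close>-operator. For the
  latter the Nijenhuis conditions make \<open>D\<close> take values in the centralizer of \<open>x\<close> and
  kill the quadratic terms \<open>[[x,y],[x,z]]\<close> and \<open>\<rho>([x,y]) \<rho>(x)\<close>; the same three
  conditions make \<open>(Id + t ad x, Id + t \<rho>(x))\<close> a homomorphism from \<open>T + t D\<close> to \<open>T\<close>.
\<close>

locale lie_alg =
  fixes sg :: "'k::field \<Rightarrow> 'g::ab_group_add \<Rightarrow> 'g"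
    and br :: "'g \<Rightarrow> 'g \<Rightarrow> 'g"
  assumes lie_algebra: "lie_algebra sg br"
begin

sublocale g: vector_space sg
  using lie_algebra by (simp add: lie_algebra_def)

sublocale gg: vector_space_pair sg sg ..

lemma bracket_linear_left: "Vector_Spaces.linear sg sg (\<lambda>z. br z y)"
  and bracket_linear_right: "Vector_Spaces.linear sg sg (br y)"
  using lie_algebra by (simp_all add: lie_algebra_def)

lemmas bracket_add_left = gg.linear_add[OF bracket_linear_left]
  and bracket_add_right = gg.linear_add[OF bracket_linear_right]
  and bracket_diff_right = gg.linear_diff[OF bracket_linear_right]
  and bracket_scale_left = gg.linear_scale[OF bracket_linear_left]
  and bracket_scale_right = gg.linear_scale[OF bracket_linear_right]
  and bracket_zero_left = gg.linear_0[OF bracket_linear_left]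
  and bracket_zero_right = gg.linear_0[OF bracket_linear_right]

lemma bracket_self: "br a a = 0"
  using lie_algebra by (simp add: lie_algebra_def)

lemma bracket_antisym: "br a b = - br b a"
proof -
  have "br (a + b) (a + b) = 0" by (rule bracket_self)
  then have "br a a + br a b + br b a + br b b = 0"
    by (simp add: bracket_add_left bracket_add_right algebra_simps)
  then have "br a b + br b a = 0"
    by (simp add: bracket_self)
  then show ?thesis by (simp add: eq_neg_iff_add_eq_0)
qed

lemma bracket_leibniz: "br z (br a b) = br (br z a) b + br a (br z b)"
proof -
  have "br z (br a b) + br a (br b z) + br b (br z a) = 0"
    using lie_algebra by (simp add: lie_algebra_def)
  moreover have "br a (br b z) = - br a (br z b)"
    by (metis bracket_antisym bracket_diff_right bracket_zero_right diff_0)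
  moreover have "br b (br z a) = - br (br z a) b"
    by (rule bracket_antisym)
  ultimately show ?thesis
    by (simp add: algebra_simps eq_neg_iff_add_eq_0)
qed

lemma lie_hom_id_plus_ad:
  assumes "\<And>y z. br (br x y) (br x z) = 0"
  shows "lie_hom sg br (\<lambda>y. y + sg t (br x y))"
  unfolding lie_hom_def
proof
  show "Vector_Spaces.linear sg sg (\<lambda>y. y + sg t (br x y))"
    by (intro gg.linear_compose_add gg.linear_compose_scale_right g.linear_ident
        bracket_linear_right)
  show "\<forall>y z. br y z + sg t (br x (br y z)) = br (y + sg t (br x y)) (z + sg t (br x z))"
    by (simp add: bracket_add_left bracket_add_right bracket_scale_left bracket_scale_right
        assms bracket_leibniz[of x] g.scale_right_distrib add_ac)
qed

end

locale lie_module =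
  fixes sg :: "'k::field \<Rightarrow> 'g::ab_group_add \<Rightarrow> 'g"
    and br :: "'g \<Rightarrow> 'g \<Rightarrow> 'g"
    and sv :: "'k \<Rightarrow> 'v::ab_group_add \<Rightarrow> 'v"
    and rho :: "'g \<Rightarrow> 'v \<Rightarrow> 'v"
  assumes lie_rep: "lie_rep sg br sv rho"
begin

sublocale lie_alg sg br
  using lie_rep by unfold_locales (simp add: lie_rep_def)

sublocale V: vector_space sv
  using lie_rep by (simp add: lie_rep_def)

sublocale VV: vector_space_pair sv sv ..
sublocale gV: vector_space_pair sg sv ..
sublocale Vg: vector_space_pair sv sg ..

lemma rep_linear_left: "Vector_Spaces.linear sg sv (\<lambda>y. rho y u)"
  using lie_rep g.vector_space_axioms by (simp add: lie_rep_def linear_iff)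

lemma rep_linear_right: "Vector_Spaces.linear sv sv (rho y)"
  using lie_rep by (simp add: lie_rep_def)

lemmas rep_add_left = gV.linear_add[OF rep_linear_left]
  and rep_add_right = VV.linear_add[OF rep_linear_right]
  and rep_diff_right = VV.linear_diff[OF rep_linear_right]
  and rep_scale_left = gV.linear_scale[OF rep_linear_left]
  and rep_scale_right = VV.linear_scale[OF rep_linear_right]
  and rep_zero_left = gV.linear_0[OF rep_linear_left]

lemma rep_bracket: "rho (br a b) u = rho a (rho b u) - rho b (rho a u)"
  using lie_rep by (simp add: lie_rep_def)

lemma rep_intertwines_id_plus:
  assumes "\<And>y u. rho (br x y) (rho x u) = 0"
  shows "rho y u + sv t (rho x (rho y u)) = rho (y + sg t (br x y)) (u + sv t (rho x u))"
proof -
  have "rho x (rho y u) = rho y (rho x u) + rho (br x y) u"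
    by (simp add: rep_bracket)
  then show ?thesis
    by (simp add: rep_add_left rep_add_right rep_scale_left rep_scale_right assms
        algebra_simps)
qed

lemma rep_commute: "br x y = 0 \<Longrightarrow> rho x (rho y u) = rho y (rho x u)"
  using rep_bracket[of x y u] by (simp add: rep_zero_left)

lemma inf_deformationI:
  assumes T: "O_operator sg br sv rho T" and Tf: "O_operator sg br sv rho Tf"
    and first_order: "\<And>u v. br (T u) (Tf v) + br (Tf u) (T v)
      = T (rho (Tf u) v - rho (Tf v) u) + Tf (rho (T u) v - rho (T v) u)"
  shows "inf_deformation sg br sv rho T Tf"
proof -
  interpret T: linear sv sg T using T by (simp add: O_operator_def)
  interpret Tf: linear sv sg Tf using Tf by (simp add: O_operator_def)
  have "O_operator sg br sv rho (\<lambda>u. T u + sg t (Tf u))" for t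
    unfolding O_operator_def
  proof (intro conjI allI)
    show "Vector_Spaces.linear sv sg (\<lambda>u. T u + sg t (Tf u))"
      by (intro Vg.linear_compose_add Vg.linear_compose_scale_right T.linear_axioms Tf.linear_axioms)
    fix u v
    define a where "a = rho (T u) v - rho (T v) u"
    define b where "b = rho (Tf u) v - rho (Tf v) u"
    have arg: "rho (T u + sg t (Tf u)) v - rho (T v + sg t (Tf v)) u = a + sv t b"
      by (simp add: a_def b_def rep_add_left rep_scale_left algebra_simps)
    have "br (T u + sg t (Tf u)) (T v + sg t (Tf v))
        = br (T u) (T v) + sg t (br (T u) (Tf v) + br (Tf u) (T v)) + sg t (sg t (br (Tf u) (Tf v)))"
      by (simp add: bracket_add_left bracket_add_right bracket_scale_left bracket_scale_right
          algebra_simps)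
    also have "\<dots> = T a + sg t (T b + Tf a) + sg t (sg t (Tf b))"
      using T Tf by (simp add: O_operator_def first_order a_def b_def)
    also have "\<dots> = T (a + sv t b) + sg t (Tf (a + sv t b))"
      by (simp add: T.add T.scale Tf.add Tf.scale algebra_simps)
    finally show "br (T u + sg t (Tf u)) (T v + sg t (Tf v))
        = T (rho (T u + sg t (Tf u)) v - rho (T v + sg t (Tf v)) u)
          + sg t (Tf (rho (T u + sg t (Tf u)) v - rho (T v + sg t (Tf v)) u))"
      by (simp only: arg)
  qed
  then show ?thesis
    using Tf by (simp add: inf_deformation_def O_operator_def)
qed

end

locale O_op = lie_module sg br sv rho
  for sg :: "'k::field \<Rightarrow> 'g::ab_group_add \<Rightarrow> 'g"
    and br :: "'g \<Rightarrow> 'g \<Rightarrow> 'g"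
    and sv :: "'k \<Rightarrow> 'v::ab_group_add \<Rightarrow> 'v"
    and rho :: "'g \<Rightarrow> 'v \<Rightarrow> 'v" +
  fixes T :: "'v \<Rightarrow> 'g"
  assumes O_operator: "O_operator sg br sv rho T"
begin

sublocale T: linear sv sg T
  using O_operator by (simp add: O_operator_def)

lemma O_bracket: "br (T u) (T v) = T (rho (T u) v - rho (T v) u)"
  using O_operator by (simp add: O_operator_def)

definition coboundary :: "'g \<Rightarrow> 'v \<Rightarrow> 'g" where
  "coboundary x u = br (T u) x + T (rho x u)"

lemma coboundary_linear: "Vector_Spaces.linear sv sg (coboundary x)"
proof -
  have "Vector_Spaces.linear sv sg (\<lambda>u. br (T u) x + T (rho x u))"
    by (intro Vg.linear_compose_add
        Vector_Spaces.linear_compose[OF T.linear_axioms bracket_linear_left, unfolded comp_def]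
        Vector_Spaces.linear_compose[OF rep_linear_right T.linear_axioms, unfolded comp_def])
  then show ?thesis
    by (simp add: coboundary_def[abs_def])
qed

lemma T_rep: "T (rho x u) = coboundary x u + br x (T u)"
  by (simp add: coboundary_def bracket_antisym[of "T u"])

lemma rep_T_rep:
  "rho (T (rho x u)) w = rho (coboundary x u) w + rho x (rho (T u) w) - rho (T u) (rho x w)"
  by (simp add: T_rep rep_add_left rep_bracket)

lemma coboundary_cocycle:
  "br (T u) (coboundary x v) + br (coboundary x u) (T v)
    = T (rho (coboundary x u) v - rho (coboundary x v) u)
      + coboundary x (rho (T u) v - rho (T v) u)"
proof -
  define a where "a = rho (T u) v - rho (T v) u"
  have "br (T u) (coboundary x v) + br (coboundary x u) (T v)
      = br (T u) (T (rho x v)) + br (T (rho x u)) (T v) - br x (br (T u) (T v))"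
    by (simp add: T_rep bracket_add_left bracket_add_right bracket_leibniz[of x] algebra_simps)
  also have "\<dots> = T (rho (T u) (rho x v) - rho (T (rho x v)) u + rho (T (rho x u)) v
      - rho (T v) (rho x u) - rho x a) + coboundary x a"
    by (simp add: O_bracket a_def[symmetric] T_rep[of x a] T.add T.diff algebra_simps)
  also have "\<dots> = T (rho (coboundary x u) v - rho (coboundary x v) u) + coboundary x a"
    by (simp add: rep_T_rep a_def rep_diff_right algebra_simps)
  finally show ?thesis
    by (simp add: a_def)
qed

context
  fixes x :: 'g
  assumes Nij: "x \<in> Nij br rho T"
begin

lemma Nij_bracket: "br (br x y) (br x z) = 0"
  and Nij_rep: "rho (br x y) (rho x u) = 0"
  and coboundary_central: "br x (coboundary x u) = 0"
  using Nij by (simp_all add: Nij_def coboundary_def)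

lemma coboundary_bracket:
  "br (coboundary x u) (coboundary x v)
    = coboundary x (rho (coboundary x u) v - rho (coboundary x v) u)"
proof -
  let ?D = "coboundary x"
  define w where "w = rho (?D u) v - rho (?D v) u"
  have "rho (T (rho x u')) (rho x v') = rho (?D u') (rho x v')" for u' v'
    by (simp add: T_rep rep_add_left Nij_rep)
  moreover have "rho x (rho (?D u') v') = rho (?D u') (rho x v')" for u' v'
    by (rule rep_commute[OF coboundary_central])
  ultimately have "br (T (rho x u)) (T (rho x v)) = T (rho x w)"
    by (simp add: O_bracket w_def rep_diff_right)
  moreover have "br (T (rho x u)) (T (rho x v))
      = br (?D u) (?D v) + br x (br (?D u) (T v) + br (T u) (?D v))"
    by (simp add: T_rep bracket_add_left bracket_add_right bracket_leibniz[of x]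
        Nij_bracket coboundary_central bracket_zero_left bracket_zero_right algebra_simps)
  moreover have "br x (br (?D u) (T v) + br (T u) (?D v)) = T (rho x w) - ?D w"
    using coboundary_cocycle[of u x v]
    by (simp add: w_def add.commute bracket_add_right coboundary_central T_rep)
  ultimately show ?thesis
    by (simp add: w_def)
qed

lemma coboundary_O_operator: "O_operator sg br sv rho (coboundary x)"
  using coboundary_linear coboundary_bracket by (simp add: O_operator_def)

lemma O_hom_id_plus:
  "O_hom sg br sv rho (\<lambda>u. T u + sg t (coboundary x u)) T
     (\<lambda>y. y + sg t (br x y)) (\<lambda>u. u + sv t (rho x u))"
  unfolding O_hom_def
proof (intro conjI allI)
  show "lie_hom sg br (\<lambda>y. y + sg t (br x y))"
    by (rule lie_hom_id_plus_ad[OF Nij_bracket])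
  show "Vector_Spaces.linear sv sv (\<lambda>u. u + sv t (rho x u))"
    by (intro VV.linear_compose_add VV.linear_compose_scale_right V.linear_ident rep_linear_right)
  show "T (u + sv t (rho x u))
      = T u + sg t (coboundary x u) + sg t (br x (T u + sg t (coboundary x u)))" for u
    by (simp add: T.add T.scale T_rep bracket_add_right bracket_scale_right coboundary_central
        algebra_simps)
  show "rho y u + sv t (rho x (rho y u)) = rho (y + sg t (br x y)) (u + sv t (rho x u))" for y u
    by (rule rep_intertwines_id_plus[OF Nij_rep])
qed

lemma coboundary_trivial_inf_deformation:
  "trivial_inf_deformation sg br sv rho T (coboundary x)"
  unfolding trivial_inf_deformation_def
  using inf_deformationI[OF O_operator coboundary_O_operator] coboundary_cocycle O_hom_id_plus
  by (auto simp: add.commute)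

end

end

theorem theorem4p9:
  fixes sg :: "'k::field \<Rightarrow> 'g::ab_group_add \<Rightarrow> 'g"
    and br :: "'g \<Rightarrow> 'g \<Rightarrow> 'g"
    and sv :: "'k \<Rightarrow> 'v::ab_group_add \<Rightarrow> 'v"
    and rho :: "'g \<Rightarrow> 'v \<Rightarrow> 'v"
    and T :: "'v \<Rightarrow> 'g"
    and x :: 'g
  assumes "lie_rep sg br sv rho"
    and "O_operator sg br sv rho T"
    and "x \<in> Nij br rho T"
  shows "trivial_inf_deformation sg br sv rho T (\<lambda>u. br (T u) x + T (rho x u))"
proof -
  interpret O_op sg br sv rho T
    using assms(1,2) by unfold_locales
  show ?thesis
    using coboundary_trivial_inf_deformation[OF assms(3)]
    by (simp add: coboundary_def[abs_def])
qed

end
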